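(* The following hold: $$\alpha(4)=1,\qquad \alpha(3)\ge \tfrac12,\qquad \beta(4)\ge \tfrac13,\qquad \beta(3)\ge \tfrac14.$$
   Context: A set $S$ of positive integers is called $n$-free if its elements can be arranged in a sequence, each element appearing exactly once, that contains no $n$-term arithmetic progression as a subsequence. The sequence is a finite permutation if $S$ is finite, and a sequence indexed by the positive integers if $S$ is infinite. A sequence contains an $n$-term arithmetic progression as a subsequence if there are positions $i_1<\cdots<i_n$ whose entries satisfy $a_{i_{m+1}}-a_{i_m}=d$ for all $m$, for some fixed $d\ne0$ (positive or negative). For $S\subseteq\mathbb{Z}_{>0}$, let $A(n)=|S\cap[1,n]|$. The upper density is $\overline{d}(S)=\limsup_{n\to\infty}A(n)/n$ and the lower density is $\underline{d}(S)=\liminf_{n\to\infty}A(n)/n$. For $n\ge3$, define $$\alpha(n)=\sup\{\overline{d}(S): S \text{ is } n\text{-free}\},\qquad \beta(n)=\sup\{\underline{d}(S): S \text{ is } n\text{-free}\}.$$ *)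

theory Defs
  imports Complex_Main "HOL-Library.Extended_Real"
begin

definition has_AP_subseq :: "(nat \<Rightarrow> int) \<Rightarrow> nat set \<Rightarrow> nat \<Rightarrow> bool" where
  "has_AP_subseq a I n \<longleftrightarrow>
     (\<exists>i :: nat \<Rightarrow> nat. \<exists>d :: int. d \<noteq> 0 \<and>
        (\<forall>m<n. i m \<in> I) \<and>
        (\<forall>m. m + 1 < n \<longrightarrow> i m < i (m + 1) \<and> a (i (m + 1)) - a (i m) = d))"

definition n_free :: "nat \<Rightarrow> nat set \<Rightarrow> bool" where
  "n_free n S \<longleftrightarrow>
     (finite S \<and> (\<exists>xs. distinct xs \<and> set xs = S \<and>
                    \<not> has_AP_subseq (\<lambda>k. int (xs ! k)) {..<length xs} n))
   \<or> (infinite S \<and> (\<exists>a :: nat \<Rightarrow> nat. bij_betw a UNIV S \<and>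
                    \<not> has_AP_subseq (\<lambda>k. int (a k)) UNIV n))"

definition counting :: "nat set \<Rightarrow> nat \<Rightarrow> nat" where
  "counting S n = card (S \<inter> {1..n})"

definition upper_density :: "nat set \<Rightarrow> ereal" where
  "upper_density S = limsup (\<lambda>n. ereal (real (counting S n) / real n))"

definition lower_density :: "nat set \<Rightarrow> ereal" where
  "lower_density S = liminf (\<lambda>n. ereal (real (counting S n) / real n))"

definition alpha :: "nat \<Rightarrow> ereal" where
  "alpha n = Sup {upper_density S | S. S \<subseteq> {1..} \<and> n_free n S}"

definition beta :: "nat \<Rightarrow> ereal" where
  "beta n = Sup {lower_density S | S. S \<subseteq> {1..} \<and> n_free n S}"

end

theory Submission
  imports Defs "HOL-Library.Infinite_Set"
begin

(* All four bounds come from one construction.  Take disjoint intervals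
   ("blocks") [A k, B k] of positive integers with 2 B k < A (k+1), let S be their union,
   and list S block by block, ordering each block by the bit reversal of its elements.
   Bit reversal of W-bit numbers maps no 3-term AP x, y, z monotonically, so a 3-term AP
   that appears in this order must have its last two terms in one block and its first
   term in an earlier block; the gap condition then forbids a 4-term AP, and the stronger
   condition B (k+1) + B k < 2 A (k+1) forbids 3-term APs altogether.
   Density bounds for S are obtained by counting whole blocks.  The family
   F m (blocks [(2m)^k, m (2m)^k - 1]) is 4-free with upper density at least 1 - 1/m,
   whence alpha 4 = 1, and F 2 has lower density at least 1/3; the blocks
   [3^k, (3^(k+1) - 1)/2] give a 3-free set of upper density at least 1/2 and lower
   density at least 1/4.
   The file develops: bit reversal, the block construction (as a locale), general
   density estimates, the two concrete families, and finally the theorem. *)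

section \<open>Bit reversal destroys 3-term arithmetic progressions\<close>

fun bitrev :: "nat \<Rightarrow> nat \<Rightarrow> nat" where
  "bitrev 0 x = 0"
| "bitrev (Suc W) x = (x mod 2) * 2^W + bitrev W (x div 2)"

lemma bitrev_less: "bitrev W x < 2^W"
proof (induction W arbitrary: x)
  case 0 then show ?case by simp
next
  case (Suc W)
  have "x mod 2 = 0 \<or> x mod 2 = 1" by auto
  with Suc[of "x div 2"] show ?case by auto
qed

lemma bitrev_inj: "x < 2^W \<Longrightarrow> y < 2^W \<Longrightarrow> bitrev W x = bitrev W y \<Longrightarrow> x = y"
proof (induction W arbitrary: x y)
  case 0 then show ?case by simp
next
  case (Suc W)
  have bounds: "bitrev W (x div 2) < 2^W" "bitrev W (y div 2) < 2^W" by (rule bitrev_less)+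
  have bits: "x mod 2 = 0 \<or> x mod 2 = 1" "y mod 2 = 0 \<or> y mod 2 = 1" by auto
  from Suc.prems(3) have eq:
    "(x mod 2) * 2^W + bitrev W (x div 2) = (y mod 2) * 2^W + bitrev W (y div 2)" by simp
  have low: "x mod 2 = y mod 2" using eq bounds bits by auto
  then have "bitrev W (x div 2) = bitrev W (y div 2)" using eq by simp
  moreover have "x div 2 < 2^W" "y div 2 < 2^W" using Suc.prems by auto
  ultimately have "x div 2 = y div 2" using Suc.IH by blast
  with low show ?case by (metis div_mult_mod_eq)
qed

lemma AP_ends_same_parity: "(x::nat) + z = 2*y \<Longrightarrow> x mod 2 = z mod 2"
  by (metis dvd_triv_left even_add mod2_eq_if)

lemma AP_halves:
  assumes "(x::nat) + z = 2*y" "y mod 2 = x mod 2" "x mod 2 = z mod 2"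
  shows "x div 2 + z div 2 = 2 * (y div 2)"
proof -
  have "x = 2*(x div 2) + x mod 2" "z = 2*(z div 2) + z mod 2" "y = 2*(y div 2) + y mod 2"
    by simp_all
  then show ?thesis using assms by linarith
qed

text \<open>No nontrivial 3-term AP x, y, z of W-bit numbers has increasing bit reversals:
  either the last bits agree and we recurse on the halves, or the middle term has the
  other parity, which puts its reversal above or below both others.\<close>
lemma bitrev_no_monotone_AP:
  "x < 2^W \<Longrightarrow> y < 2^W \<Longrightarrow> z < 2^W \<Longrightarrow> x + z = 2*y \<Longrightarrow> x \<noteq> z
   \<Longrightarrow> bitrev W x < bitrev W y \<Longrightarrow> bitrev W y < bitrev W z \<Longrightarrow> False"
proof (induction W arbitrary: x y z)
  case 0 then show ?case by simp
next
  case (Suc W)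
  have bounds: "bitrev W (x div 2) < 2^W" "bitrev W (y div 2) < 2^W" "bitrev W (z div 2) < 2^W"
    by (rule bitrev_less)+
  have xz: "x mod 2 = z mod 2" using Suc.prems(4) by (rule AP_ends_same_parity)
  show ?case
  proof (cases "y mod 2 = x mod 2")
    case True
    have halves: "x div 2 + z div 2 = 2 * (y div 2)" using Suc.prems(4) True xz by (rule AP_halves)
    have distinct: "x div 2 \<noteq> z div 2" using xz Suc.prems(5) by (metis div_mult_mod_eq)
    have "bitrev W (x div 2) < bitrev W (y div 2)" "bitrev W (y div 2) < bitrev W (z div 2)"
      using Suc.prems(6,7) True xz by simp_all
    moreover have "x div 2 < 2^W" "y div 2 < 2^W" "z div 2 < 2^W" using Suc.prems(1-3) by auto
    ultimately show ?thesis using Suc.IH halves distinct by blast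
  next
    case False
    have xy: "x mod 2 * 2 ^ W + bitrev W (x div 2) < y mod 2 * 2 ^ W + bitrev W (y div 2)"
      using Suc.prems(6) by simp
    have yz: "y mod 2 * 2 ^ W + bitrev W (y div 2) < z mod 2 * 2 ^ W + bitrev W (z div 2)"
      using Suc.prems(7) by simp
    show ?thesis
    proof (cases "x mod 2 = 0")
      case True
      then have "y mod 2 = 1" "z mod 2 = 0" using False xz by auto
      then show ?thesis using yz bounds by simp
    next
      case odd: False
      then have "x mod 2 = 1" "y mod 2 = 0" using False by auto
      then show ?thesis using xy bounds by simp
    qed
  qed
qed

lemma has_AP_subseqE:
  assumes "has_AP_subseq a I n"
  obtains i :: "nat \<Rightarrow> nat" and d :: int where "d \<noteq> 0"
    "\<And>m. m + 2 < n \<Longrightarrow> i m < i (m+1) \<and> i (m+1) < i (m+2) \<and>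
        a (i (m+1)) - a (i m) = d \<and> a (i (m+2)) - a (i (m+1)) = d"
proof -
  obtain i d where "d \<noteq> 0"
    and step: "\<forall>m. m + 1 < n \<longrightarrow> i m < i (m + 1) \<and> a (i (m + 1)) - a (i m) = d"
    using assms unfolding has_AP_subseq_def by blast
  moreover have "i m < i (m+1) \<and> i (m+1) < i (m+2) \<and>
        a (i (m+1)) - a (i m) = d \<and> a (i (m+2)) - a (i (m+1)) = d" if "m + 2 < n" for m
    using step[rule_format, of m] step[rule_format, of "m+1"] that
    by (simp add: add.assoc)
  ultimately show ?thesis using that by blast
qed

lemma counting_le: "counting T n \<le> n"
proof -
  have "card (T \<inter> {1..n}) \<le> card {1..n}" by (intro card_mono) auto
  then show ?thesis unfolding counting_def by simp
qed

lemma counting_add: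
  assumes "p < a" "a \<le> b" "b \<le> n" "{a..b} \<subseteq> T"
  shows "counting T p + (Suc b - a) \<le> counting T n"
proof -
  have "card ((T \<inter> {1..p}) \<union> {a..b}) = card (T \<inter> {1..p}) + card {a..b}"
    using assms(1) by (intro card_Un_disjoint) auto
  moreover have "card ((T \<inter> {1..p}) \<union> {a..b}) \<le> card (T \<inter> {1..n})"
    using assms by (intro card_mono) auto
  ultimately show ?thesis unfolding counting_def by simp
qed

lemma upper_density_ge:
  assumes "\<And>N. \<exists>n\<ge>N. 0 < n \<and> v * real n \<le> real (counting T n)"
  shows "ereal v \<le> upper_density T"
  unfolding upper_density_def limsup_INF_SUP
proof (rule INF_greatest)
  fix N :: nat
  obtain n where n: "n \<ge> N" "0 < n" "v * real n \<le> real (counting T n)" using assms by blast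
  then have "ereal v \<le> ereal (real (counting T n) / real n)" by (simp add: pos_le_divide_eq)
  then show "ereal v \<le> (SUP m\<in>{N..}. ereal (real (counting T m) / real m))"
    using n(1) by (intro SUP_upper2[of n]) auto
qed

lemma lower_density_ge:
  assumes "\<And>n. 0 < n \<Longrightarrow> v * real n \<le> real (counting T n)"
  shows "ereal v \<le> lower_density T"
  unfolding lower_density_def
proof (rule Liminf_bounded)
  show "\<forall>\<^sub>F n in sequentially. ereal v \<le> ereal (real (counting T n) / real n)"
    unfolding eventually_sequentially
  proof (intro exI allI impI)
    fix n :: nat assume "1 \<le> n"
    then show "ereal v \<le> ereal (real (counting T n) / real n)"
      using assms[of n] by (simp add: pos_le_divide_eq)
  qed
qed

lemma upper_density_le_1: "upper_density T \<le> 1"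
  unfolding upper_density_def
proof (rule Limsup_bounded, rule always_eventually, rule allI)
  fix n
  have "real (counting T n) \<le> real n" using counting_le[of T n] by simp
  then show "ereal (real (counting T n) / real n) \<le> 1"
    by (cases "n = 0") (auto simp: divide_le_eq)
qed

section \<open>The block construction\<close>

locale block_sequence =
  fixes A B :: "nat \<Rightarrow> nat"
  assumes block_nonempty: "\<And>k. A k \<le> B k"
    and gap: "\<And>k. 2 * B k < A (Suc k)"
    and A_pos: "1 \<le> A 0"
begin

text \<open>The union of the blocks, the block of an element, and the sort key of the
  arrangement: first the block, then the bit reversal inside the block.\<close>
definition S where "S = {s. \<exists>k. A k \<le> s \<and> s \<le> B k}"
definition block where "block s = (LEAST k. s \<le> B k)"
definition key where "key s = 2^(B (block s)) + bitrev (B (block s)) s"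

lemma strict_mono_A: "strict_mono A"
  unfolding strict_mono_Suc_iff
proof
  fix k show "A k < A (Suc k)" using block_nonempty[of k] gap[of k] by linarith
qed

lemma strict_mono_B: "strict_mono B"
  unfolding strict_mono_Suc_iff
proof
  fix k show "B k < B (Suc k)" using block_nonempty[of "Suc k"] gap[of k] by linarith
qed

lemma B_less_A: "j < k \<Longrightarrow> B j < A k"
proof -
  assume "j < k"
  then have "A (Suc j) \<le> A k" using strict_mono_A by (simp add: strict_mono_less_eq)
  then show ?thesis using gap[of j] by simp
qed

lemma block_eq: "A k \<le> s \<Longrightarrow> s \<le> B k \<Longrightarrow> block s = k"
  unfolding block_def
proof (rule Least_equality)
  fix j assume "A k \<le> s" "s \<le> B j"
  then show "k \<le> j" using B_less_A[of j k] by (cases "j < k") auto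
qed

lemma in_block: "s \<in> S \<Longrightarrow> A (block s) \<le> s \<and> s \<le> B (block s)"
  unfolding S_def using block_eq by auto

lemma interval_subset: "A k \<le> a \<Longrightarrow> b \<le> B k \<Longrightarrow> {a..b} \<subseteq> S"
  unfolding S_def by (auto intro!: exI[of _ k])

lemma A_ge_1: "1 \<le> A k"
proof -
  have "A 0 \<le> A k" using strict_mono_A by (simp add: strict_mono_less_eq)
  then show ?thesis using A_pos by simp
qed

lemma S_pos: "S \<subseteq> {1..}"
  unfolding S_def using A_ge_1 order_trans by fastforce

lemma infinite_S: "infinite S"
proof -
  have "range A \<subseteq> S" unfolding S_def using block_nonempty by auto
  moreover have "infinite (range A)"
    using strict_mono_A by (intro range_inj_infinite) (rule strict_mono_imp_inj_on)
  ultimately show ?thesis using infinite_super by blast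
qed

lemma key_less_if_block_less: "block x < block y \<Longrightarrow> key x < key y"
proof -
  assume "block x < block y"
  then have "B (block x) < B (block y)" using strict_mono_B by (simp add: strict_mono_less)
  then have "(2::nat)^(Suc (B (block x))) \<le> 2^(B (block y))" by (intro power_increasing) auto
  moreover have "key x < 2^(Suc (B (block x)))"
    unfolding key_def using bitrev_less[of "B (block x)" x] by simp
  ultimately show ?thesis unfolding key_def by simp
qed

lemma block_mono_key: "key x < key y \<Longrightarrow> block x \<le> block y"
  using key_less_if_block_less[of y x] by force

lemma less_pow_block: "x \<in> S \<Longrightarrow> x < 2^(B (block x))"
  using in_block[of x] less_exp[of "B (block x)"] by (meson le_less_trans)

lemma inj_key: "inj_on key S"
proof (rule inj_onI)
  fix x y assume xy: "x \<in> S" "y \<in> S" "key x = key y"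
  have same: "block x = block y"
    using key_less_if_block_less[of x y] key_less_if_block_less[of y x] xy(3) by fastforce
  then have "bitrev (B (block x)) x = bitrev (B (block x)) y" using xy(3) unfolding key_def by simp
  then show "x = y" using bitrev_inj less_pow_block xy same by metis
qed

text \<open>Bit reversal excludes a single block,
  and the gap excludes the middle term lying before the block of the last one.\<close>
lemma AP_in_key_order:
  assumes S: "x \<in> S" "y \<in> S" "z \<in> S" and AP: "x + z = 2*y" "x \<noteq> z"
    and keys: "key x < key y" "key y < key z"
  shows "block y = block z \<and> block x < block z"
proof -
  have le: "block x \<le> block y" "block y \<le> block z" using block_mono_key keys by auto
  have x_earlier: "block x < block z"
  proof (rule ccontr)
    assume "\<not> block x < block z"
    then have same: "block x = block y" "block y = block z" using le by auto
    have "bitrev (B (block x)) x < bitrev (B (block x)) y" "bitrev (B (block x)) y < bitrev (B (block x)) z"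
      using keys same unfolding key_def by simp_all
    moreover have "x < 2^(B (block x))" "y < 2^(B (block x))" "z < 2^(B (block x))"
      using less_pow_block[OF S(1)] less_pow_block[OF S(2)] less_pow_block[OF S(3)] same by simp_all
    ultimately show False using bitrev_no_monotone_AP AP by blast
  qed
  define k where "k = block z"
  have k_Suc: "k = Suc (k - 1)" using x_earlier k_def by simp
  have "A k \<le> z" using in_block[OF S(3)] k_def by simp
  then have "B (k - 1) < y" using gap[of "k - 1"] k_Suc AP(1) by simp
  moreover have "block y \<le> k - 1 \<Longrightarrow> B (block y) \<le> B (k - 1)"
    using strict_mono_B by (simp add: strict_mono_less_eq)
  ultimately have "block y = k" using in_block[OF S(2)] le(2) k_def by fastforce
  then show ?thesis using x_earlier k_def by simp
qed

definition arrangement where "arrangement = inv_into S key \<circ> enumerate (key ` S)"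

lemma infinite_keys: "infinite (key ` S)"
  using infinite_S inj_key finite_imageD by blast

lemma arrangement_bij: "bij_betw arrangement UNIV S"
  unfolding arrangement_def
  using bij_betw_trans[OF bij_enumerate[OF infinite_keys]
      bij_betw_inv_into[OF inj_on_imp_bij_betw[OF inj_key]]] .

lemma arrangement_in: "arrangement i \<in> S"
  using arrangement_bij bij_betwE by blast

lemma key_arrangement_mono: "i < j \<Longrightarrow> key (arrangement i) < key (arrangement j)"
proof -
  have "key (arrangement i) = enumerate (key ` S) i" for i
    unfolding arrangement_def using enumerate_in_set[OF infinite_keys] by (simp add: f_inv_into_f)
  then show "i < j \<Longrightarrow> key (arrangement i) < key (arrangement j)"
    using enumerate_mono[OF _ infinite_keys] by simp
qed

lemma arrangement_AP:
  assumes "i0 < i1" "i1 < i2" "d \<noteq> 0"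
    "int (arrangement i1) - int (arrangement i0) = d" "int (arrangement i2) - int (arrangement i1) = d"
  shows "block (arrangement i1) = block (arrangement i2) \<and>
         block (arrangement i0) < block (arrangement i2)"
proof (rule AP_in_key_order[OF arrangement_in arrangement_in arrangement_in])
  show "arrangement i0 + arrangement i2 = 2 * arrangement i1" using assms(4,5) by linarith
  show "arrangement i0 \<noteq> arrangement i2" using assms(3-5) by linarith
  show "key (arrangement i0) < key (arrangement i1)" "key (arrangement i1) < key (arrangement i2)"
    using assms(1,2) key_arrangement_mono by auto
qed

text \<open>In a 4-term AP the middle terms would have to lie both in one block (first triple)
  and in different blocks (second triple).\<close>
theorem S_4_free: "n_free 4 S"
proof -
  have "\<not> has_AP_subseq (\<lambda>k. int (arrangement k)) UNIV 4"
  proof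
    assume "has_AP_subseq (\<lambda>k. int (arrangement k)) UNIV 4"
    then obtain i d where "d \<noteq> 0" and AP: "\<And>m::nat. m + 2 < 4 \<Longrightarrow>
        i m < i (m+1) \<and> i (m+1) < i (m+2) \<and>
        int (arrangement (i (m+1))) - int (arrangement (i m)) = d \<and>
        int (arrangement (i (m+2))) - int (arrangement (i (m+1))) = d"
      by (rule has_AP_subseqE) blast
    have first: "i 0 < i 1" "i 1 < i 2" "int (arrangement (i 1)) - int (arrangement (i 0)) = d"
      "int (arrangement (i 2)) - int (arrangement (i 1)) = d" using AP[of 0] by (simp_all add: numeral_2_eq_2 numeral_3_eq_3)
    have second: "i 1 < i 2" "i 2 < i 3" "int (arrangement (i 2)) - int (arrangement (i 1)) = d"
      "int (arrangement (i 3)) - int (arrangement (i 2)) = d" using AP[of 1] by (simp_all add: numeral_2_eq_2 numeral_3_eq_3)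
    show False
      using arrangement_AP[OF first(1,2) \<open>d \<noteq> 0\<close> first(3,4)]
        arrangement_AP[OF second(1,2) \<open>d \<noteq> 0\<close> second(3,4)] by simp
  qed
  then show ?thesis unfolding n_free_def using infinite_S arrangement_bij by blast
qed

text \<open>If moreover each block is short compared with the previous gap, then a
  3-term AP with y, z in block k and x before it is impossible: x = 2y - z would exceed
  B (k-1).\<close>
theorem S_3_free:
  assumes short: "\<And>k. B (Suc k) + B k < 2 * A (Suc k)"
  shows "n_free 3 S"
proof -
  have "\<not> has_AP_subseq (\<lambda>k. int (arrangement k)) UNIV 3"
  proof
    assume "has_AP_subseq (\<lambda>k. int (arrangement k)) UNIV 3"
    then obtain i d where "d \<noteq> 0" and AP: "\<And>m::nat. m + 2 < 3 \<Longrightarrow>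
        i m < i (m+1) \<and> i (m+1) < i (m+2) \<and>
        int (arrangement (i (m+1))) - int (arrangement (i m)) = d \<and>
        int (arrangement (i (m+2))) - int (arrangement (i (m+1))) = d"
      by (rule has_AP_subseqE) blast
    have first: "i 0 < i 1" "i 1 < i 2" "int (arrangement (i 1)) - int (arrangement (i 0)) = d"
      "int (arrangement (i 2)) - int (arrangement (i 1)) = d" using AP[of 0] by (simp_all add: numeral_2_eq_2 numeral_3_eq_3)
    define x y z where "x = arrangement (i 0)" "y = arrangement (i 1)" "z = arrangement (i 2)"
    have blocks: "block y = block z" "block x < block z"
      using arrangement_AP[OF first(1,2) \<open>d \<noteq> 0\<close> first(3,4)] x_y_z_def by auto
    have sum: "x + z = 2 * y" using first(3,4) x_y_z_def by linarith
    define k where "k = block z"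
    have k_Suc: "k = Suc (k - 1)" using blocks k_def by simp
    have "A k \<le> y" "z \<le> B k"
      using in_block[OF arrangement_in, of "i 1"] in_block[OF arrangement_in, of "i 2"]
        blocks k_def x_y_z_def by auto
    moreover have "B k + B (k - 1) < 2 * A k" using short[of "k - 1"] k_Suc by simp
    ultimately have "B (k - 1) < x" using sum by linarith
    moreover have "B (block x) \<le> B (k - 1)"
      using blocks k_def strict_mono_B by (simp add: strict_mono_less_eq)
    ultimately show False using in_block[OF arrangement_in, of "i 0"] x_y_z_def by simp
  qed
  then show ?thesis unfolding n_free_def using infinite_S arrangement_bij by blast
qed

lemma counting_in_block:
  assumes "A k \<le> b" "b \<le> B k" "b \<le> n"
  shows "counting S (A k - 1) + (Suc b - A k) \<le> counting S n"
proof (rule counting_add[OF _ assms(1,3) interval_subset[OF order.refl assms(2)]])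
  show "A k - 1 < A k" using A_ge_1[of k] by simp
qed

lemma counting_lower_bound:
  assumes A0: "A 0 = 1" and fill: "\<And>k. A (Suc k) \<le> A k + c * (Suc (B k) - A k)"
  shows "n \<le> c * counting S n"
proof -
  have "\<forall>n < A k. n \<le> c * counting S n" for k
  proof (induction k)
    case 0 then show ?case using A0 by simp
  next
    case (Suc k)
    have before: "A k - 1 \<le> c * counting S (A k - 1)" using Suc.IH A_ge_1[of k] by simp
    have "A k < A (Suc k)" using strict_mono_A by (simp add: strict_mono_less)
    then have "0 < c" using fill[of k] by (cases "c = 0") auto
    show ?case
    proof (intro allI impI)
      fix n assume n: "n < A (Suc k)"
      consider "n < A k" | "A k \<le> n" "n \<le> B k" | "B k < n" by linarith
      then show "n \<le> c * counting S n"
      proof cases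
        case 1 then show ?thesis using Suc.IH by simp
      next
        case 2
        then have "counting S (A k - 1) + (Suc n - A k) \<le> counting S n"
          by (intro counting_in_block) auto
        then have "c * (counting S (A k - 1) + (Suc n - A k)) \<le> c * counting S n"
          by (rule mult_le_mono2)
        then have "c * counting S (A k - 1) + c * (Suc n - A k) \<le> c * counting S n"
          by (simp only: add_mult_distrib2)
        moreover have "Suc n - A k \<le> c * (Suc n - A k)" using \<open>0 < c\<close> by simp
        ultimately show ?thesis using before 2 A_ge_1[of k] by linarith
      next
        case 3
        then have "counting S (A k - 1) + (Suc (B k) - A k) \<le> counting S n"
          using block_nonempty[of k] by (intro counting_in_block) auto
        then have "c * (counting S (A k - 1) + (Suc (B k) - A k)) \<le> c * counting S n"
          by (rule mult_le_mono2)
        then have "c * counting S (A k - 1) + c * (Suc (B k) - A k) \<le> c * counting S n"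
          by (simp only: add_mult_distrib2)
        then show ?thesis using before n fill[of k] A_ge_1[of k] by linarith
      qed
    qed
  qed
  moreover have "Suc n \<le> A (Suc n)" using strict_mono_A by (rule strict_mono_imp_increasing)
  ultimately show ?thesis by (simp add: Suc_le_eq)
qed

lemma lower_density_S:
  assumes "A 0 = 1" and "\<And>k. A (Suc k) \<le> A k + c * (Suc (B k) - A k)"
  shows "ereal (1 / real c) \<le> lower_density S"
proof (rule lower_density_ge)
  fix n :: nat
  have "real n \<le> real c * real (counting S n)"
    using counting_lower_bound[OF assms, of n] unfolding of_nat_mult[symmetric] of_nat_le_iff .
  then show "1 / real c * real n \<le> real (counting S n)"
    by (cases "c = 0") (auto simp: field_simps)
qed

lemma upper_density_S:
  assumes "\<And>k. v * real (B k) \<le> real (counting S (B k))"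
  shows "ereal v \<le> upper_density S"
proof (rule upper_density_ge)
  fix N
  have "N \<le> B N" using strict_mono_B by (rule strict_mono_imp_increasing)
  moreover have "0 < B N" using A_ge_1[of N] block_nonempty[of N] by simp
  ultimately show "\<exists>n\<ge>N. 0 < n \<and> v * real n \<le> real (counting S n)" using assms by blast
qed

end

section \<open>The 4-free family F m\<close>

text \<open>Blocks [(2m)^k, m (2m)^k - 1]: a fraction 1 - 1/m of [1, B k] is already covered
  by the last block.\<close>
definition F :: "nat \<Rightarrow> nat set" where
  "F m = block_sequence.S (\<lambda>k. (2*m)^k) (\<lambda>k. m*(2*m)^k - 1)"

lemma F_block_bounds:
  assumes "2 \<le> (m::nat)"
  shows "2 * (2*m)^k \<le> m*(2*m)^k" "1 \<le> (2*m)^k" "(2*m)^Suc k = 2 * (m*(2*m)^k)"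
  using assms by simp_all

lemma F_blocks: "2 \<le> m \<Longrightarrow> block_sequence (\<lambda>k. (2*m)^k) (\<lambda>k. m*(2*m)^k - 1)"
proof unfold_locales
  fix k assume "2 \<le> m"
  then show "(2*m)^k \<le> m*(2*m)^k - 1" "2 * (m*(2*m)^k - 1) < (2*m)^(Suc k)"
    using F_block_bounds[of m k] by linarith+
qed simp

lemma F_free: "2 \<le> m \<Longrightarrow> n_free 4 (F m) \<and> F m \<subseteq> {1..}"
  unfolding F_def using block_sequence.S_4_free[OF F_blocks] block_sequence.S_pos[OF F_blocks] by blast

lemma F_upper_density:
  assumes m: "2 \<le> m"
  shows "ereal (1 - 1/real m) \<le> upper_density (F m)"
proof -
  interpret b: block_sequence "\<lambda>k. (2*m)^k" "\<lambda>k. m*(2*m)^k - 1" using F_blocks[OF m] .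
  show ?thesis unfolding F_def
  proof (rule b.upper_density_S)
    fix k
    define p where "p = (2*m)^k"
    have mp: "2 * p \<le> m * p" "1 \<le> p" using F_block_bounds[OF m, of k] p_def by simp_all
    have "counting b.S (p - 1) + (Suc (m*p - 1) - p) \<le> counting b.S (m*p - 1)"
      using b.counting_in_block[of k] b.block_nonempty[of k] p_def by simp
    then have "real (m*p) - real p \<le> real (counting b.S (m*p - 1))" using mp by linarith
    moreover have "(1 - 1/real m) * real (m*p - 1) = real (m*p) - real p - 1 + 1/real m"
      using m mp by (simp add: field_simps)
    moreover have "1/real m \<le> 1" using m by simp
    ultimately show "(1 - 1/real m) * real (m*(2*m)^k - 1) \<le> real (counting b.S (m*(2*m)^k - 1))"
      unfolding p_def by linarith
  qed
qed

lemma F_lower_density: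
  assumes m: "2 \<le> m"
  shows "ereal (1/3) \<le> lower_density (F m)"
proof -
  interpret b: block_sequence "\<lambda>k. (2*m)^k" "\<lambda>k. m*(2*m)^k - 1" using F_blocks[OF m] .
  have "ereal (1 / real 3) \<le> lower_density b.S"
  proof (rule b.lower_density_S)
    fix k
    show "(2*m)^Suc k \<le> (2*m)^k + 3 * (Suc (m*(2*m)^k - 1) - (2*m)^k)"
      using F_block_bounds[OF m, of k] by linarith
  qed simp
  then show ?thesis unfolding F_def by (simp only: of_nat_numeral)
qed

section \<open>The 3-free set T3\<close>

definition T3 :: "nat set" where
  "T3 = block_sequence.S (\<lambda>k. 3^k) (\<lambda>k. 3*3^k div 2)"

lemma T3_block_end: "2 * (3*3^k div 2) + 1 = (3*3^k :: nat)"
proof -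
  have "odd (3*3^k :: nat)" by simp
  then show ?thesis by (rule odd_two_times_div_two_succ)
qed

lemma T3_blocks: "block_sequence (\<lambda>k. 3^k) (\<lambda>k. 3*3^k div 2)"
proof unfold_locales
  fix k :: nat
  have "1 \<le> (3::nat)^k" by simp
  then show "(3::nat)^k \<le> 3*3^k div 2" "2 * (3*3^k div 2) < (3::nat)^Suc k"
    using T3_block_end[of k] by simp_all
qed simp

lemma T3_free: "n_free 3 T3 \<and> T3 \<subseteq> {1..}"
proof -
  interpret b: block_sequence "\<lambda>k. 3^k" "\<lambda>k. 3*3^k div 2" by (rule T3_blocks)
  have "n_free 3 b.S"
  proof (rule b.S_3_free)
    fix k :: nat
    show "3*3^Suc k div 2 + 3*3^k div 2 < 2 * (3::nat)^Suc k"
      using T3_block_end[of k] T3_block_end[of "Suc k"] power_Suc[of "3::nat" k] by linarith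
  qed
  then show ?thesis unfolding T3_def using b.S_pos by simp
qed

lemma T3_counting: "n \<le> 4 * counting T3 n"
proof -
  interpret b: block_sequence "\<lambda>k. 3^k" "\<lambda>k. 3*3^k div 2" by (rule T3_blocks)
  show ?thesis unfolding T3_def
  proof (rule b.counting_lower_bound)
    fix k
    show "(3::nat)^Suc k \<le> 3^k + 4 * (Suc (3*3^k div 2) - 3^k)"
      using T3_block_end[of k] by simp
  qed simp
qed

lemma T3_lower_density: "ereal (1/4) \<le> lower_density T3"
proof (rule lower_density_ge)
  fix n
  have "real n \<le> 4 * real (counting T3 n)" using T3_counting[of n] by linarith
  then show "1/4 * real n \<le> real (counting T3 n)" by simp
qed

text \<open>At the end of block k, T3 contains the block (about 3^k/2 elements) plus at least a
  quarter of the 3^k - 1 smaller numbers.\<close>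
lemma T3_upper_density: "ereal (1/2) \<le> upper_density T3"
proof -
  interpret b: block_sequence "\<lambda>k. 3^k" "\<lambda>k. 3*3^k div 2" by (rule T3_blocks)
  show ?thesis unfolding T3_def
  proof (rule b.upper_density_S)
    fix k
    define p :: nat where "p = 3^k"
    define q :: nat where "q = 3*3^k div 2"
    have q2: "2 * q + 1 = 3 * p" "1 \<le> p" using T3_block_end[of k] p_def q_def by simp_all
    have "counting b.S (p - 1) + (Suc q - p) \<le> counting b.S q"
      using b.counting_in_block[of k q q] b.block_nonempty[of k] p_def q_def by simp
    moreover have "p - 1 \<le> 4 * counting b.S (p - 1)" using T3_counting unfolding T3_def by simp
    ultimately have "q \<le> 2 * counting b.S q" using q2 by linarith
    then show "1/2 * real (3*3^k div 2) \<le> real (counting b.S (3*3^k div 2))"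
      unfolding q_def by linarith
  qed
qed

lemma upper_density_le_alpha: "S \<subseteq> {1..} \<Longrightarrow> n_free n S \<Longrightarrow> upper_density S \<le> alpha n"
  unfolding alpha_def by (blast intro: Sup_upper)

lemma lower_density_le_beta: "S \<subseteq> {1..} \<Longrightarrow> n_free n S \<Longrightarrow> lower_density S \<le> beta n"
  unfolding beta_def by (blast intro: Sup_upper)

lemma alpha_le_1: "alpha n \<le> 1"
  unfolding alpha_def by (rule Sup_least) (auto simp: upper_density_le_1)

lemma ereal_ge_1_if_approximated:
  assumes "\<And>m. 2 \<le> m \<Longrightarrow> ereal (1 - 1/real m) \<le> x"
  shows "1 \<le> x"
proof (rule ereal_le_epsilon2)
  fix e :: real assume e: "0 < e"
  define m where "m = nat \<lceil>1/e\<rceil> + 2"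
  have m: "2 \<le> m" "1/e < real m" using m_def by linarith+
  then have "1 / real m < e" using e by (simp add: field_simps)
  then have "ereal 1 \<le> ereal (1 - 1/real m) + ereal e" by simp
  also have "\<dots> \<le> x + ereal e" using assms[OF m(1)] by (rule add_right_mono)
  finally show "1 \<le> x + ereal e" by (simp add: one_ereal_def)
qed

theorem theorem3:
  shows "alpha 4 = 1 \<and> alpha 3 \<ge> ereal (1/2) \<and> beta 4 \<ge> ereal (1/3) \<and> beta 3 \<ge> ereal (1/4)"
proof (intro conjI)
  have "ereal (1 - 1/real m) \<le> alpha 4" if "2 \<le> m" for m
    using F_upper_density[OF that] upper_density_le_alpha F_free[OF that] by (blast intro: order.trans)
  then show "alpha 4 = 1" using alpha_le_1 ereal_ge_1_if_approximated by (blast intro: antisym)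
  show "ereal (1/2) \<le> alpha 3"
    using T3_upper_density upper_density_le_alpha T3_free by (blast intro: order.trans)
  show "ereal (1/3) \<le> beta 4"
    using F_lower_density lower_density_le_beta F_free[of 2] by (blast intro: order.trans)
  show "ereal (1/4) \<le> beta 3"
    using T3_lower_density lower_density_le_beta T3_free by (blast intro: order.trans)
qed

end
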